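(* For every route $R$ and every $b\in\mathbb{Z}^{V_+}_{\ge0}$, $$\operatorname{conv}\big(\Pi(R)\cap[\mathbf 0,b]^N\big)=\operatorname{conv}(\Pi(R))\cap[\mathbf 0,b]^N.$$
   Context: $G=(V,E)$ complete undirected graph with $V=\{0\}\cup V_+$ ($0$ depot, $V_+$ customers); $D=(V,A)$ replaces each edge by two opposite arcs. Capacity $C\in\mathbb{Q}_{>0}$; scenarios $\xi\in[N]$ with demand vectors $d^\xi\in\mathbb{Q}^{V_+}_{\ge0}$, $d^\xi(v)\le C$ for all $\xi,v$. A route $R=(v_1,\dots,v_\ell)$ is the cycle $0,v_1,\dots,v_\ell,0$ through distinct customers, $v_0=v_{\ell+1}=0$. Vectors $y\in\mathbb{R}^{[N]\times V_+}$ have entries $y^\xi_v$. For a route $R$ and $\xi$, $\mathcal{Y}^\xi(R)$ is the set of $y^\xi\in\mathbb{Z}^{V_+}_{\ge0}$ for which there exist $f\in\mathbb{R}^A_{\ge0}$, $g\in\mathbb{R}^{V_+}_{\ge0}$ with $f_{(v_{i-1},v_i)}+d^\xi(v_i)=f_{(v_i,v_{i+1})}+g_{v_i}$ ($i\in[\ell]$), $f_{(v_{i-1},v_i)}\le C$ ($i\in[\ell+1]$), $g_{v_i}\le Cy^\xi_{v_i}$ ($i\in[\ell]$). $\Pi(R)=\mathcal{Y}^1(R)\times\cdots\times\mathcal{Y}^N(R)$. $[\mathbf 0,b]^N=\{y:0\le y^\xi_v\le b_v\ \forall\xi,v\}$. *)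

theory Defs
  imports "HOL-Analysis.Analysis"
begin

text \<open>Customers V+ are the elements of a finite type 'v; the depot 0 is None,
  so V = 'v option. Scenarios [N] are the elements of a finite type 's.\<close>

definition arcs :: "('v option \<times> 'v option) set" where
  "arcs = {(u, w). u \<noteq> w}"

definition is_route :: "'v list \<Rightarrow> bool" where
  "is_route R \<longleftrightarrow> R \<noteq> [] \<and> distinct R"

definition rv :: "'v list \<Rightarrow> nat \<Rightarrow> 'v option" where
  "rv R i = (if 1 \<le> i \<and> i \<le> length R then Some (R ! (i - 1)) else None)"

definition Yset :: "real \<Rightarrow> ('v \<Rightarrow> real) \<Rightarrow> 'v list \<Rightarrow> ('v \<Rightarrow> real) set" where
  "Yset C dxi R = {y. (\<forall>v. y v \<in> \<int> \<and> 0 \<le> y v) \<and>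
     (\<exists>f :: 'v option \<times> 'v option \<Rightarrow> real. \<exists>g :: 'v \<Rightarrow> real.
        (\<forall>a\<in>arcs. 0 \<le> f a) \<and> (\<forall>v. 0 \<le> g v) \<and>
        (\<forall>i\<in>{1..length R}.
           f (rv R (i - 1), rv R i) + dxi (R ! (i - 1)) = f (rv R i, rv R (i + 1)) + g (R ! (i - 1))) \<and>
        (\<forall>i\<in>{1..length R + 1}. f (rv R (i - 1), rv R i) \<le> C) \<and>
        (\<forall>i\<in>{1..length R}. g (R ! (i - 1)) \<le> C * y (R ! (i - 1))))}"

definition PiR :: "real \<Rightarrow> ('s::finite \<Rightarrow> 'v::finite \<Rightarrow> real) \<Rightarrow> 'v list \<Rightarrow> (real ^ ('s \<times> 'v)) set" where
  "PiR C d R = {y. \<forall>xi. (\<lambda>v. y $ (xi, v)) \<in> Yset C (d xi) R}"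

definition boxN :: "('v::finite \<Rightarrow> int) \<Rightarrow> (real ^ ('s::finite \<times> 'v)) set" where
  "boxN b = {y. \<forall>xi v. 0 \<le> y $ (xi, v) \<and> y $ (xi, v) \<le> of_int (b v)}"

end

theory Submission
  imports Defs
begin

text \<open>By a flow argument, \<open>Y\<^sup>\<xi>(R)\<close> consists of the nonnegative integral \<open>y\<close> with
  \<open>D - C \<le> C * \<Sum> y\<close> for every segment of consecutive customers of \<open>R\<close> of total demand
  \<open>D\<close>; for integral \<open>y\<close> this is the rounded inequality \<open>\<Sum> y \<ge> \<lceil>D / C\<rceil> - 1\<close>. The real
  points satisfying all rounded inequalities and the box form a convex set \<open>P\<close> containing
  \<open>conv \<Pi>(R) \<inter> [0, b]\<^sup>N\<close>. In prefix-sum coordinates along \<open>R\<close> every inequality defining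
  \<open>P\<close> becomes a difference constraint with integral right-hand side, and such systems are
  integral: a real solution is a convex combination of its componentwise floor and a solution
  with fewer distinct fractional parts. Hence every point of \<open>P\<close> is a convex combination of
  integral points of \<open>P\<close>, which are exactly the points of \<open>\<Pi>(R) \<inter> [0, b]\<^sup>N\<close>.\<close>

definition opt_val :: "real^'n \<Rightarrow> 'n option \<Rightarrow> real" where
  "opt_val p a = (case a of None \<Rightarrow> 0 | Some i \<Rightarrow> p$i)"

lemma opt_val_None [simp]: "opt_val p None = 0"
  and opt_val_Some [simp]: "opt_val p (Some i) = p$i"
  by (simp_all add: opt_val_def)

text \<open>A triple \<open>(a, a', c)\<close> is the constraint \<open>c \<le> p a - p a'\<close>; the extra vertex \<open>None\<close> is
  pinned to \<open>0\<close>, so that bounds on single coordinates are difference constraints as well.\<close>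
definition satisfies_diffs :: "('n option \<times> 'n option \<times> int) set \<Rightarrow> real^'n \<Rightarrow> bool" where
  "satisfies_diffs K p \<longleftrightarrow> (\<forall>(a, a', c)\<in>K. of_int c \<le> opt_val p a - opt_val p a')"

lemma satisfies_diffs_Un: "satisfies_diffs (K \<union> L) p \<longleftrightarrow> satisfies_diffs K p \<and> satisfies_diffs L p"
  unfolding satisfies_diffs_def by blast

definition frac_values :: "real^'n \<Rightarrow> real set" where
  "frac_values p = (\<lambda>i. frac (p$i)) ` UNIV - {0}"

lemma floor_diff_ge:
  fixes x z :: real
  assumes "of_int c \<le> x - z"
  shows "c \<le> \<lfloor>x\<rfloor> - \<lfloor>z\<rfloor>"
proof -
  have "\<lfloor>z + of_int c\<rfloor> \<le> \<lfloor>x\<rfloor>" using assms by (intro floor_mono) simp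
  thus ?thesis by simp
qed

lemma frac_frac_divide:
  fixes x f :: real
  assumes "frac x \<le> f"
  shows "frac (frac x / f) = (if frac x = f then 0 else frac x / f)"
proof (cases "frac x = f")
  case True
  thus ?thesis by (cases "f = 0") simp_all
next
  case False
  with assms frac_ge_0[of x] have "0 < f" by linarith
  with assms False frac_ge_0[of x] have "0 \<le> frac x / f" "frac x / f < 1"
    by (auto simp: divide_simps)
  thus ?thesis using False by simp
qed

lemma floor_plus_scaled_frac_diff_ge:
  fixes x z f :: real
  assumes "of_int c \<le> x - z" "frac x \<le> f" "frac z \<le> f"
  shows "of_int c \<le> (of_int \<lfloor>x\<rfloor> + frac x / f) - (of_int \<lfloor>z\<rfloor> + frac z / f)"
proof -
  have f: "0 \<le> f" using assms(2) frac_ge_0[of x] by linarith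
  have fx: "0 \<le> frac x / f" "frac x / f \<le> 1" and fz: "0 \<le> frac z / f" "frac z / f \<le> 1"
    using assms(2,3) f by (auto simp: divide_simps)
  show ?thesis
  proof (cases "c = \<lfloor>x\<rfloor> - \<lfloor>z\<rfloor>")
    case True
    have "frac z \<le> frac x" using assms(1) True unfolding frac_def by simp
    hence "frac z / f \<le> frac x / f" using f by (simp add: divide_right_mono)
    with True show ?thesis by simp
  next
    case False
    hence "c + 1 \<le> \<lfloor>x\<rfloor> - \<lfloor>z\<rfloor>" using floor_diff_ge[OF assms(1)] by simp
    hence "of_int c + 1 \<le> of_int \<lfloor>x\<rfloor> - (of_int \<lfloor>z\<rfloor> :: real)" by linarith
    with fx fz show ?thesis by linarith
  qed
qed

lemma diff_constraints_rounding_step: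
  fixes p :: "real^'n"
  assumes sat: "satisfies_diffs K p" and nonint: "frac_values p \<noteq> {}"
  obtains f p0 p1 where "0 < f" "f < 1" "p = (1 - f) *\<^sub>R p0 + f *\<^sub>R p1"
    "satisfies_diffs K p0" "\<forall>i. p0$i \<in> \<int>"
    "satisfies_diffs K p1" "card (frac_values p1) < card (frac_values p)"
proof
  \<comment> \<open>\<open>f\<close> is the largest fractional part; rescaling the fractional parts by \<open>1 / f\<close> makes
      the coordinates with fractional part \<open>f\<close> integral.\<close>
  have fin: "finite (frac_values p)" unfolding frac_values_def by simp
  define f where "f = Max (frac_values p)"
  have f_mem: "f \<in> frac_values p" unfolding f_def using nonint fin by simp
  thus f_pos: "0 < f" and "f < 1" unfolding frac_values_def
    using frac_lt_1 frac_ge_0 by (auto simp: order_le_less)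
  have frac_le: "frac (p$i) \<le> f" for i
  proof (cases "frac (p$i) = 0")
    case False
    thus ?thesis using fin unfolding f_def frac_values_def by simp
  qed (use f_pos in linarith)
  hence frac_opt_val_le: "frac (opt_val p a) \<le> f" for a
    using f_pos unfolding opt_val_def by (cases a) auto
  define p0 :: "real^'n" where "p0 = (\<chi> i. of_int \<lfloor>p$i\<rfloor>)"
  define p1 :: "real^'n" where "p1 = (\<chi> i. of_int \<lfloor>p$i\<rfloor> + frac (p$i) / f)"
  show "p = (1 - f) *\<^sub>R p0 + f *\<^sub>R p1"
    unfolding p0_def p1_def using f_pos by (simp add: vec_eq_iff frac_def field_simps)
  have "opt_val p0 a = of_int \<lfloor>opt_val p a\<rfloor>" for a
    unfolding p0_def opt_val_def by (cases a) auto
  thus "satisfies_diffs K p0"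
    using sat unfolding satisfies_diffs_def
    by (fastforce dest: floor_diff_ge simp flip: of_int_diff)
  show "\<forall>i. p0$i \<in> \<int>" unfolding p0_def by simp
  have "opt_val p1 a = of_int \<lfloor>opt_val p a\<rfloor> + frac (opt_val p a) / f" for a
    unfolding p1_def opt_val_def by (cases a) auto
  thus "satisfies_diffs K p1"
    using sat unfolding satisfies_diffs_def
    by (auto intro!: floor_plus_scaled_frac_diff_ge frac_opt_val_le)
  have "frac_values p1 \<subseteq> (\<lambda>t. t / f) ` (frac_values p - {f})"
  proof
    fix t assume "t \<in> frac_values p1"
    then obtain i where "t = frac (frac (p$i) / f)" "t \<noteq> 0"
      unfolding frac_values_def p1_def by auto
    hence "t = frac (p$i) / f" "frac (p$i) \<in> frac_values p - {f}"
      using frac_frac_divide[OF frac_le[of i]] unfolding frac_values_def by (auto split: if_splits)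
    thus "t \<in> (\<lambda>t. t / f) ` (frac_values p - {f})" by blast
  qed
  hence "card (frac_values p1) \<le> card (frac_values p - {f})"
    using fin by (meson card_image_le card_mono finite_Diff finite_imageI order_trans)
  also have "\<dots> < card (frac_values p)" using fin f_mem by (rule card_Diff1_less)
  finally show "card (frac_values p1) < card (frac_values p)" .
qed

lemma diff_constraints_in_convex_hull_integral:
  assumes "satisfies_diffs K p"
  shows "p \<in> convex hull {q. satisfies_diffs K q \<and> (\<forall>i. q$i \<in> \<int>)}"
  using assms
proof (induction "card (frac_values p)" arbitrary: p rule: less_induct)
  case less
  show ?case
  proof (cases "frac_values p = {}")
    case True
    hence "\<forall>i. p$i \<in> \<int>" unfolding frac_values_def using frac_eq_0_iff by blast
    with less.prems show ?thesis by (intro hull_inc) simp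
  next
    case False
    then obtain f p0 p1 where f: "0 < f" "f < 1" and p: "p = (1 - f) *\<^sub>R p0 + f *\<^sub>R p1"
      and p0: "satisfies_diffs K p0" "\<forall>i. p0$i \<in> \<int>"
      and p1: "satisfies_diffs K p1" "card (frac_values p1) < card (frac_values p)"
      using diff_constraints_rounding_step[OF less.prems] by blast
    have "p1 \<in> convex hull {q. satisfies_diffs K q \<and> (\<forall>i. q$i \<in> \<int>)}"
      using less.hyps p1 by blast
    moreover have "p0 \<in> convex hull {q. satisfies_diffs K q \<and> (\<forall>i. q$i \<in> \<int>)}"
      using p0 by (intro hull_inc) simp
    ultimately show ?thesis
      unfolding p using f by (intro convexD) auto
  qed
qed

definition route_index :: "'v list \<Rightarrow> 'v \<Rightarrow> nat" where
  "route_index R v = (SOME i. i < length R \<and> R!i = v)"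

lemma route_index_nth: "distinct R \<Longrightarrow> i < length R \<Longrightarrow> route_index R (R!i) = i"
  unfolding route_index_def by (rule some_equality) (auto simp: nth_eq_iff_index_eq)

lemma arc_along_route:
  assumes "distinct R" "m < length R"
  shows "(rv R m, rv R (Suc m)) \<in> arcs"
  using assms by (cases m) (auto simp: arcs_def rv_def nth_eq_iff_index_eq Suc_le_eq)

lemma Yset_segment_bound:
  assumes y: "y \<in> Yset C dxi R" and "distinct R" and jk: "j < k" "k \<le> length R"
  shows "(\<Sum>i\<in>{j..<k}. dxi (R!i)) - C \<le> C * (\<Sum>i\<in>{j..<k}. y (R!i))"
proof -
  obtain f g where
    f_nonneg: "\<forall>a\<in>arcs. 0 \<le> f a" and
    flow: "\<forall>i\<in>{1..length R}.
      f (rv R (i - 1), rv R i) + dxi (R ! (i - 1)) = f (rv R i, rv R (i + 1)) + g (R ! (i - 1))" and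
    f_le: "\<forall>i\<in>{1..length R + 1}. f (rv R (i - 1), rv R i) \<le> C" and
    g_le: "\<forall>i\<in>{1..length R}. g (R ! (i - 1)) \<le> C * y (R ! (i - 1))"
    using y unfolding Yset_def by blast
  define F where "F m = f (rv R m, rv R (Suc m))" for m
  have telescope: "F j + (\<Sum>i\<in>{j..<k'}. dxi (R!i)) = F k' + (\<Sum>i\<in>{j..<k'}. g (R!i))"
    if "j \<le> k'" "k' \<le> length R" for k'
    using that
  proof (induction k' rule: dec_induct)
    case (step k')
    thus ?case using flow[rule_format, of "Suc k'"] unfolding F_def by simp
  qed simp
  have "g (R!i) \<le> C * y (R!i)" if "i < length R" for i
    using g_le[rule_format, of "Suc i"] that by simp
  hence "(\<Sum>i\<in>{j..<k}. g (R!i)) \<le> (\<Sum>i\<in>{j..<k}. C * y (R!i))"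
    using jk by (intro sum_mono) simp
  moreover have "F k \<le> C" using f_le[rule_format, of "Suc k"] jk unfolding F_def by simp
  moreover have "0 \<le> F j"
    using f_nonneg arc_along_route[OF \<open>distinct R\<close>, of j] jk unfolding F_def by simp
  ultimately show ?thesis
    using telescope[of k] jk by (simp add: sum_distrib_left)
qed

text \<open>The load carried from the \<open>m\<close>-th stop to the next when every customer unloads as much
  as the capacity \<open>C * y\<close> allows; this greedy flow witnesses membership in \<open>Yset\<close>.\<close>
primrec residual_load :: "real \<Rightarrow> ('v \<Rightarrow> real) \<Rightarrow> ('v \<Rightarrow> real) \<Rightarrow> 'v list \<Rightarrow> nat \<Rightarrow> real" where
  "residual_load C dxi y R 0 = 0"
| "residual_load C dxi y R (Suc m) = max 0 (residual_load C dxi y R m + dxi (R!m) - C * y (R!m))"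

lemma residual_load_nonneg: "0 \<le> residual_load C dxi y R m"
  by (cases m) simp_all

lemma residual_load_pos_imp_segment:
  assumes "0 < residual_load C dxi y R m"
  shows "\<exists>j<m. residual_load C dxi y R m = (\<Sum>i\<in>{j..<m}. dxi (R!i) - C * y (R!i))"
  using assms
proof (induction m)
  case (Suc m)
  hence load_Suc: "residual_load C dxi y R (Suc m) = residual_load C dxi y R m + dxi (R!m) - C * y (R!m)"
    by (simp split: if_splits)
  show ?case
  proof (cases "residual_load C dxi y R m = 0")
    case True
    thus ?thesis using load_Suc by (intro exI[of _ m]) simp
  next
    case False
    with Suc.IH residual_load_nonneg obtain j
      where "j < m" "residual_load C dxi y R m = (\<Sum>i\<in>{j..<m}. dxi (R!i) - C * y (R!i))"
      by (metis order_less_le)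
    thus ?thesis using load_Suc by (intro exI[of _ j]) simp
  qed
qed simp

lemma residual_load_le:
  assumes "0 \<le> C" and segment_bounds: "\<And>j k. j < k \<Longrightarrow> k \<le> length R \<Longrightarrow>
      (\<Sum>i\<in>{j..<k}. dxi (R!i)) - C \<le> C * (\<Sum>i\<in>{j..<k}. y (R!i))"
    and "m \<le> length R"
  shows "residual_load C dxi y R m \<le> C"
proof (cases "0 < residual_load C dxi y R m")
  case True
  then obtain j where "j < m"
    "residual_load C dxi y R m = (\<Sum>i\<in>{j..<m}. dxi (R!i)) - C * (\<Sum>i\<in>{j..<m}. y (R!i))"
    by (auto dest: residual_load_pos_imp_segment simp: sum_subtractf sum_distrib_left)
  thus ?thesis using segment_bounds[of j m] \<open>m \<le> length R\<close> by simp
qed (use assms in simp)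

lemma segment_bounds_imp_Yset:
  fixes y dxi :: "'v \<Rightarrow> real"
  assumes "0 \<le> C" and dxi_nonneg: "\<And>v. 0 \<le> dxi v" and "distinct R"
    and y: "\<And>v. y v \<in> \<int> \<and> 0 \<le> y v"
    and segment_bounds: "\<And>j k. j < k \<Longrightarrow> k \<le> length R \<Longrightarrow>
      (\<Sum>i\<in>{j..<k}. dxi (R!i)) - C \<le> C * (\<Sum>i\<in>{j..<k}. y (R!i))"
  shows "y \<in> Yset C dxi R"
proof -
  let ?F = "residual_load C dxi y R"
  define f :: "'v option \<times> 'v option \<Rightarrow> real" where
    "f a = (case snd a of None \<Rightarrow> ?F (length R) | Some v \<Rightarrow> ?F (route_index R v))" for a
  define g where "g v = (if v \<in> set R then min (?F (route_index R v) + dxi v) (C * y v) else 0)" for v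
  have f_route: "f (rv R (i - 1), rv R i) = ?F (i - 1)" if "1 \<le> i" "i \<le> length R + 1" for i
  proof (cases "i = length R + 1")
    case False
    thus ?thesis using that \<open>distinct R\<close> unfolding f_def by (simp add: rv_def route_index_nth)
  qed (simp add: f_def rv_def)
  have g_route: "g (R!m) = min (?F m + dxi (R!m)) (C * y (R!m))" if "m < length R" for m
    using that \<open>distinct R\<close> unfolding g_def by (simp add: route_index_nth)
  show ?thesis
    unfolding Yset_def
  proof (intro CollectI conjI exI[of _ f] exI[of _ g] ballI allI)
    fix i assume i: "i \<in> {1..length R}"
    hence "?F i = max 0 (?F (i - 1) + dxi (R!(i - 1)) - C * y (R!(i - 1)))"
      using residual_load.simps(2)[of C dxi y R "i - 1"] by simp
    moreover have "g (R!(i - 1)) = min (?F (i - 1) + dxi (R!(i - 1))) (C * y (R!(i - 1)))"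
      using i by (intro g_route) auto
    ultimately show "f (rv R (i - 1), rv R i) + dxi (R ! (i - 1)) = f (rv R i, rv R (i + 1)) + g (R ! (i - 1))"
      using i f_route[of i] f_route[of "i + 1"] by simp linarith
  next
    fix i assume "i \<in> {1..length R + 1}"
    thus "f (rv R (i - 1), rv R i) \<le> C"
      using f_route residual_load_le[OF \<open>0 \<le> C\<close> segment_bounds] by auto
  next
    fix i assume "i \<in> {1..length R}"
    thus "g (R ! (i - 1)) \<le> C * y (R ! (i - 1))" using g_route[of "i - 1"] by auto
  next
    fix v
    show "0 \<le> g v"
      using dxi_nonneg[of v] y[of v] \<open>0 \<le> C\<close> unfolding g_def by (simp add: residual_load_nonneg)
    show "y v \<in> \<int>" "0 \<le> y v" using y by simp_all
  next
    fix a show "0 \<le> f a" unfolding f_def by (simp add: residual_load_nonneg split: option.split)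
  qed
qed

lemma Yset_iff_segment_bounds:
  assumes "0 \<le> C" and "\<And>v. 0 \<le> dxi v" and "distinct R"
  shows "y \<in> Yset C dxi R \<longleftrightarrow> (\<forall>v. y v \<in> \<int> \<and> 0 \<le> y v) \<and>
     (\<forall>j k. j < k \<longrightarrow> k \<le> length R \<longrightarrow>
        (\<Sum>i\<in>{j..<k}. dxi (R!i)) - C \<le> C * (\<Sum>i\<in>{j..<k}. y (R!i)))"
    (is "_ \<longleftrightarrow> ?lhs \<and> ?rhs")
proof
  assume y: "y \<in> Yset C dxi R"
  hence "\<forall>v. y v \<in> \<int> \<and> 0 \<le> y v" unfolding Yset_def by blast
  with Yset_segment_bound[OF y assms(3)] show "?lhs \<and> ?rhs" by blast
next
  assume "?lhs \<and> ?rhs"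
  thus "y \<in> Yset C dxi R" by (intro segment_bounds_imp_Yset[OF assms]) auto
qed

definition segment_rhs :: "real \<Rightarrow> ('v \<Rightarrow> real) \<Rightarrow> 'v list \<Rightarrow> nat \<Rightarrow> nat \<Rightarrow> int" where
  "segment_rhs C dxi R j k = \<lceil>(\<Sum>i\<in>{j..<k}. dxi (R!i)) / C\<rceil> - 1"

definition segment_polyhedron ::
    "real \<Rightarrow> ('s::finite \<Rightarrow> 'v::finite \<Rightarrow> real) \<Rightarrow> 'v list \<Rightarrow> (real^('s \<times> 'v)) set" where
  "segment_polyhedron C d R = {y. \<forall>xi j k. j < k \<longrightarrow> k \<le> length R \<longrightarrow>
      of_int (segment_rhs C (d xi) R j k) \<le> (\<Sum>i\<in>{j..<k}. y$(xi, R!i))}"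

lemma diff_le_mult_iff_ceiling_le:
  fixes C D s :: real
  assumes "0 < C" "s \<in> \<int>"
  shows "D - C \<le> C * s \<longleftrightarrow> of_int (\<lceil>D / C\<rceil> - 1) \<le> s"
proof -
  obtain n where s: "s = of_int n" using assms(2) Ints_cases by blast
  have "D - C \<le> C * s \<longleftrightarrow> D / C \<le> of_int (n + 1)"
    using assms(1) by (simp add: s pos_divide_le_eq algebra_simps)
  also have "\<dots> \<longleftrightarrow> \<lceil>D / C\<rceil> \<le> n + 1" by (rule ceiling_le_iff[symmetric])
  also have "\<dots> \<longleftrightarrow> of_int (\<lceil>D / C\<rceil> - 1) \<le> s" unfolding s of_int_le_iff by linarith
  finally show ?thesis .
qed

lemma PiR_eq_integral_segment_polyhedron:
  fixes d :: "'s::finite \<Rightarrow> 'v::finite \<Rightarrow> real"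
  assumes "0 < C" "\<And>xi v. 0 \<le> d xi v" "distinct R"
  shows "PiR C d R = {y. \<forall>i. y$i \<in> \<int> \<and> 0 \<le> y$i} \<inter> segment_polyhedron C d R"
proof (intro set_eqI)
  fix y :: "real^('s \<times> 'v)"
  show "y \<in> PiR C d R \<longleftrightarrow> y \<in> {y. \<forall>i. y$i \<in> \<int> \<and> 0 \<le> y$i} \<inter> segment_polyhedron C d R"
  proof (cases "\<forall>i. y$i \<in> \<int>")
    case True
    hence "(\<Sum>i\<in>{j..<k}. d xi (R!i)) - C \<le> C * (\<Sum>i\<in>{j..<k}. y$(xi, R!i)) \<longleftrightarrow>
        of_int (segment_rhs C (d xi) R j k) \<le> (\<Sum>i\<in>{j..<k}. y$(xi, R!i))" for xi j k
      unfolding segment_rhs_def using assms(1) by (intro diff_le_mult_iff_ceiling_le) auto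
    with True show ?thesis
      unfolding PiR_def segment_polyhedron_def
      by (auto simp: split_paired_All Yset_iff_segment_bounds assms less_imp_le)
  qed (auto simp: PiR_def split_paired_All Yset_iff_segment_bounds assms less_imp_le)
qed

lemma convex_bound_ge:
  fixes a x y u v :: real
  assumes "a \<le> x" "a \<le> y" "0 \<le> u" "0 \<le> v" "u + v = 1"
  shows "a \<le> u * x + v * y"
  using convex_bound_le[of "-x" "-a" "-y" u v] assms by simp

lemma convex_segment_polyhedron: "convex (segment_polyhedron C d R)"
  unfolding segment_polyhedron_def
  by (rule convexI) (auto simp: sum.distrib sum_distrib_left[symmetric] intro!: convex_bound_ge)

lemma convex_boxN: "convex (boxN b)"
  unfolding boxN_def
  by (rule convexI) (auto intro!: convex_bound_le convex_bound_ge)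

text \<open>\<open>prefix_node R xi m\<close> carries the sum of the first \<open>m\<close> coordinates
  \<open>(xi, R!0), ..., (xi, R!(m - 1))\<close>; the empty prefix is the vertex \<open>None\<close>.\<close>
definition prefix_node :: "'v list \<Rightarrow> 's \<Rightarrow> nat \<Rightarrow> ('s \<times> 'v) option" where
  "prefix_node R xi m = (if m = 0 then None else Some (xi, R!(m - 1)))"

definition route_prefix_sums :: "'v list \<Rightarrow> real^('s::finite \<times> 'v::finite) \<Rightarrow> real^('s \<times> 'v)" where
  "route_prefix_sums R y = (\<chi> i. case i of (xi, v) \<Rightarrow>
     if v \<in> set R then (\<Sum>k\<le>route_index R v. y$(xi, R!k)) else y$(xi, v))"

definition route_increments :: "'v list \<Rightarrow> real^('s::finite \<times> 'v::finite) \<Rightarrow> real^('s \<times> 'v)" where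
  "route_increments R p = (\<chi> i. case i of (xi, v) \<Rightarrow>
     if v \<in> set R then opt_val p (prefix_node R xi (Suc (route_index R v)))
                       - opt_val p (prefix_node R xi (route_index R v))
     else p$(xi, v))"

lemma route_increments_nth:
  "distinct R \<Longrightarrow> m < length R \<Longrightarrow>
     route_increments R p $ (xi, R!m) = opt_val p (prefix_node R xi (Suc m)) - opt_val p (prefix_node R xi m)"
  by (simp add: route_increments_def route_index_nth)

lemma route_increments_off_route: "v \<notin> set R \<Longrightarrow> route_increments R p $ (xi, v) = p $ (xi, v)"
  by (simp add: route_increments_def)

lemma sum_route_increments:
  assumes "distinct R" "j \<le> k" "k \<le> length R"
  shows "(\<Sum>i\<in>{j..<k}. route_increments R p $ (xi, R!i))
       = opt_val p (prefix_node R xi k) - opt_val p (prefix_node R xi j)"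
proof -
  have "(\<Sum>i\<in>{j..<k}. route_increments R p $ (xi, R!i)) =
        (\<Sum>i\<in>{j..<k}. opt_val p (prefix_node R xi (Suc i)) - opt_val p (prefix_node R xi i))"
    using assms by (intro sum.cong) (auto simp: route_increments_nth)
  also have "\<dots> = opt_val p (prefix_node R xi k) - opt_val p (prefix_node R xi j)"
    using assms(2) by (rule sum_Suc_diff')
  finally show ?thesis .
qed

lemma opt_val_prefix_node_prefix_sums:
  assumes "distinct R" "m \<le> length R"
  shows "opt_val (route_prefix_sums R y) (prefix_node R xi m) = (\<Sum>k<m. y$(xi, R!k))"
  using assms
  by (cases m) (auto simp: prefix_node_def opt_val_def route_prefix_sums_def route_index_nth lessThan_Suc_atMost)

lemma route_increments_prefix_sums:
  assumes "distinct R"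
  shows "route_increments R (route_prefix_sums R y) = y"
proof -
  have "route_increments R (route_prefix_sums R y) $ (xi, v) = y $ (xi, v)" for xi v
  proof (cases "v \<in> set R")
    case True
    then obtain m where "m < length R" "v = R!m" by (auto simp: in_set_conv_nth)
    thus ?thesis
      using assms by (simp add: route_increments_nth opt_val_prefix_node_prefix_sums)
  next
    case False
    thus ?thesis by (simp add: route_increments_off_route route_prefix_sums_def)
  qed
  thus ?thesis by (simp add: vec_eq_iff)
qed

lemma linear_route_increments: "linear (route_increments R)"
proof -
  have opt_val_add: "opt_val (p + q) a = opt_val p a + opt_val q a"
    and opt_val_scale: "opt_val (c *\<^sub>R p) a = c * opt_val p a" for p q :: "real^'n" and c a
    by (simp_all add: opt_val_def split: option.split)
  show ?thesis
    by (rule linearI)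
       (simp_all add: vec_eq_iff route_increments_def opt_val_add opt_val_scale algebra_simps split: prod.split)
qed

lemma route_increments_Ints:
  assumes "\<forall>i. q$i \<in> \<int>"
  shows "route_increments R q $ i \<in> \<int>"
  using assms by (auto simp: route_increments_def opt_val_def split: option.split prod.split)

lemma mem_boxN_split_route:
  "y \<in> boxN b \<longleftrightarrow>
     (\<forall>xi m. m < length R \<longrightarrow> 0 \<le> y $ (xi, R!m) \<and> y $ (xi, R!m) \<le> of_int (b (R!m))) \<and>
     (\<forall>xi v. v \<notin> set R \<longrightarrow> 0 \<le> y $ (xi, v) \<and> y $ (xi, v) \<le> of_int (b v))"
    (is "_ \<longleftrightarrow> ?on_route \<and> ?off_route")
proof
  assume "?on_route \<and> ?off_route"
  moreover have "v \<in> set R \<Longrightarrow> \<exists>m<length R. v = R!m" for v by (auto simp: in_set_conv_nth)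
  ultimately show "y \<in> boxN b" unfolding boxN_def by blast
qed (simp add: boxN_def)

definition route_constraints :: "real \<Rightarrow> ('s::finite \<Rightarrow> 'v::finite \<Rightarrow> real) \<Rightarrow> 'v list \<Rightarrow> ('v \<Rightarrow> int)
    \<Rightarrow> (('s \<times> 'v) option \<times> ('s \<times> 'v) option \<times> int) set" where
  "route_constraints C d R b =
     {(prefix_node R xi k, prefix_node R xi j, segment_rhs C (d xi) R j k) | xi j k. j < k \<and> k \<le> length R}
   \<union> {(prefix_node R xi (Suc m), prefix_node R xi m, 0) | xi m. m < length R}
   \<union> {(prefix_node R xi m, prefix_node R xi (Suc m), - b (R!m)) | xi m. m < length R}
   \<union> {(Some (xi, v), None, 0) | xi v. v \<notin> set R}
   \<union> {(None, Some (xi, v), - b v) | xi v. v \<notin> set R}"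

lemma satisfies_route_constraints_iff:
  assumes "distinct R"
  shows "satisfies_diffs (route_constraints C d R b) p \<longleftrightarrow>
         route_increments R p \<in> segment_polyhedron C d R \<inter> boxN b"
proof -
  let ?val = "\<lambda>xi m. opt_val p (prefix_node R xi m)"
  let ?z = "route_increments R p"
  have constraints: "satisfies_diffs (route_constraints C d R b) p \<longleftrightarrow>
      (\<forall>xi j k. j < k \<and> k \<le> length R \<longrightarrow> of_int (segment_rhs C (d xi) R j k) \<le> ?val xi k - ?val xi j) \<and>
      (\<forall>xi m. m < length R \<longrightarrow> 0 \<le> ?val xi (Suc m) - ?val xi m) \<and>
      (\<forall>xi m. m < length R \<longrightarrow> ?val xi (Suc m) - ?val xi m \<le> of_int (b (R!m))) \<and>
      (\<forall>xi v. v \<notin> set R \<longrightarrow> 0 \<le> p$(xi, v)) \<and>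
      (\<forall>xi v. v \<notin> set R \<longrightarrow> p$(xi, v) \<le> of_int (b v))"
  proof -
    have "- c \<le> x - y \<longleftrightarrow> y - x \<le> c" for c x y :: real by linarith
    thus ?thesis
      unfolding route_constraints_def satisfies_diffs_Un
      unfolding satisfies_diffs_def by (simp add: imp_ex)
  qed
  have segments: "?z \<in> segment_polyhedron C d R \<longleftrightarrow>
      (\<forall>xi j k. j < k \<and> k \<le> length R \<longrightarrow> of_int (segment_rhs C (d xi) R j k) \<le> ?val xi k - ?val xi j)"
    using assms unfolding segment_polyhedron_def by (auto simp: sum_route_increments)
  show ?thesis
    unfolding Int_iff constraints segments mem_boxN_split_route[where R = R]
    using assms by (auto simp: route_increments_nth route_increments_off_route)
qed

lemma PiR_Int_boxN_eq:
  fixes d :: "'s::finite \<Rightarrow> 'v::finite \<Rightarrow> real"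
  assumes "0 < C" "\<And>xi v. 0 \<le> d xi v" "distinct R"
  shows "PiR C d R \<inter> boxN b = {y \<in> segment_polyhedron C d R \<inter> boxN b. \<forall>i. y$i \<in> \<int>}"
  using PiR_eq_integral_segment_polyhedron[where d = d, OF assms] by (auto simp: boxN_def split_paired_All)

lemma segment_polyhedron_Int_boxN_subset_convex_hull:
  fixes d :: "'s::finite \<Rightarrow> 'v::finite \<Rightarrow> real"
  assumes "0 < C" "\<And>xi v. 0 \<le> d xi v" "distinct R"
  shows "segment_polyhedron C d R \<inter> boxN b \<subseteq> convex hull (PiR C d R \<inter> boxN b)"
proof
  let ?K = "route_constraints C d R b"
  let ?Z = "{q. satisfies_diffs ?K q \<and> (\<forall>i. q$i \<in> \<int>)}"
  fix y assume "y \<in> segment_polyhedron C d R \<inter> boxN b"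
  hence "satisfies_diffs ?K (route_prefix_sums R y)"
    by (simp add: satisfies_route_constraints_iff route_increments_prefix_sums \<open>distinct R\<close>)
  hence y_sums: "route_prefix_sums R y \<in> convex hull ?Z"
    by (rule diff_constraints_in_convex_hull_integral)
  have "route_increments R ` ?Z \<subseteq> PiR C d R \<inter> boxN b"
    using satisfies_route_constraints_iff[OF \<open>distinct R\<close>] route_increments_Ints
    by (auto simp: PiR_Int_boxN_eq[where d = d, OF assms])
  have "y = route_increments R (route_prefix_sums R y)"
    by (simp add: route_increments_prefix_sums \<open>distinct R\<close>)
  also have "\<dots> \<in> route_increments R ` (convex hull ?Z)"
    using y_sums by (rule imageI)
  also have "\<dots> = convex hull (route_increments R ` ?Z)"
    by (rule convex_hull_linear_image[OF linear_route_increments])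
  also have "\<dots> \<subseteq> convex hull (PiR C d R \<inter> boxN b)"
    using \<open>route_increments R ` ?Z \<subseteq> PiR C d R \<inter> boxN b\<close> by (rule hull_mono)
  finally show "y \<in> convex hull (PiR C d R \<inter> boxN b)" .
qed

lemma convex_hull_Int_convex_subset:
  assumes "convex B"
  shows "convex hull (A \<inter> B) \<subseteq> convex hull A \<inter> B"
  using assms by (simp add: hull_minimal hull_mono)

theorem corollary1:
  fixes C :: real
    and d :: "'s::finite \<Rightarrow> 'v::finite \<Rightarrow> real"
    and R :: "'v list"
    and b :: "'v \<Rightarrow> int"
  assumes "C \<in> \<rat>" and "C > 0"
    and "\<And>xi v. d xi v \<in> \<rat>"
    and "\<And>xi v. 0 \<le> d xi v"
    and "\<And>xi v. d xi v \<le> C"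
    and "is_route R"
    and "\<And>v. 0 \<le> b v"
  shows "convex hull (PiR C d R \<inter> boxN b) = (convex hull (PiR C d R)) \<inter> boxN b"
proof -
  have "distinct R" using \<open>is_route R\<close> by (simp add: is_route_def)
  note data = \<open>C > 0\<close> \<open>\<And>xi v. 0 \<le> d xi v\<close> \<open>distinct R\<close>
  have "convex hull (PiR C d R) \<subseteq> segment_polyhedron C d R"
    using PiR_eq_integral_segment_polyhedron[where d = d, OF data] convex_segment_polyhedron
    by (intro hull_minimal) auto
  hence "convex hull (PiR C d R) \<inter> boxN b \<subseteq> convex hull (PiR C d R \<inter> boxN b)"
    using segment_polyhedron_Int_boxN_subset_convex_hull[where d = d, OF data] by blast
  moreover have "convex hull (PiR C d R \<inter> boxN b) \<subseteq> convex hull (PiR C d R) \<inter> boxN b"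
    using convex_boxN by (rule convex_hull_Int_convex_subset)
  ultimately show ?thesis by blast
qed

end
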